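(* Let $S=\{s_1,\dots,s_{k_1}\}$ and $T=\{t_1,\dots,t_{k_2}\}$ be nonempty sets of positive integers and $d=\gcd\{s+t: s\in S,t\in T\}$. For every positive integer $k$ there is an integer $r$ such that for each $j\in[k]$ there are nonnegative integers $a_{i,j}$ ($1\le i\le k_1$) and $b_{i,j}$ ($1\le i\le k_2$) with $$r+jd=\sum_{i=1}^{k_1}a_{i,j}s_i-\sum_{i=1}^{k_2}b_{i,j}t_i,$$ and such that $f(j):=\sum_{i=1}^{k_1}a_{i,j}+\sum_{i=1}^{k_2}b_{i,j}$ is the same for all $j\in[k]$. *)

theory Defs
  imports Main
begin

end

theory Submission
  imports Defs
begin

text \<open>
  By Bezout, \<open>d = (\<Sum>(s, t). l (s, t) * (s + t))\<close> for integers \<open>l (s, t)\<close>. For each pair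
  \<open>(s, t)\<close> and each \<open>0 \<le> j \<le> K\<close>, take \<open>j * l + K * \<bar>l\<bar>\<close> copies of \<open>s\<close> and
  \<open>K * \<bar>l\<bar> - j * l\<close> copies of \<open>t\<close>: both counts are nonnegative, their sum \<open>2 * K * \<bar>l\<bar>\<close>
  does not depend on \<open>j\<close>, and the signed value is \<open>j * l * (s + t)\<close> plus the
  \<open>j\<close>-independent offset \<open>K * \<bar>l\<bar> * (s - t)\<close>. Summing over all pairs gives \<open>r + j * d\<close>.
\<close>

lemma Gcd_image_lincomb:
  fixes f :: "'a \<Rightarrow> int"
  assumes "finite P"
  shows "\<exists>l. Gcd (f ` P) = (\<Sum>p\<in>P. l p * f p)"
  using assms
proof (induction P rule: finite_induct)
  case empty
  show ?case by simp
next
  case (insert q P)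
  obtain l where l: "Gcd (f ` P) = (\<Sum>p\<in>P. l p * f p)"
    using insert.IH by blast
  obtain u v where uv: "u * f q + v * Gcd (f ` P) = gcd (f q) (Gcd (f ` P))"
    using bezout_int by blast
  let ?l = "(\<lambda>p. v * l p)(q := u)"
  have "(\<Sum>p\<in>P. ?l p * f p) = v * (\<Sum>p\<in>P. l p * f p)"
    using insert.hyps by (auto simp: sum_distrib_left mult.assoc intro!: sum.cong)
  then have "Gcd (f ` insert q P) = (\<Sum>p\<in>insert q P. ?l p * f p)"
    using uv l insert.hyps by simp
  then show ?case by blast
qed

lemma sum_marginals_weighted:
  fixes x y :: "int \<times> int \<Rightarrow> nat"
  shows "(\<Sum>s\<in>S. int (\<Sum>t\<in>T. x (s, t)) * s) - (\<Sum>t\<in>T. int (\<Sum>s\<in>S. y (s, t)) * t)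
       = (\<Sum>(s, t)\<in>S \<times> T. int (x (s, t)) * s - int (y (s, t)) * t)"
proof -
  have "(\<Sum>s\<in>S. int (\<Sum>t\<in>T. x (s, t)) * s) - (\<Sum>t\<in>T. int (\<Sum>s\<in>S. y (s, t)) * t)
      = (\<Sum>s\<in>S. \<Sum>t\<in>T. int (x (s, t)) * s) - (\<Sum>s\<in>S. \<Sum>t\<in>T. int (y (s, t)) * t)"
    by (simp add: sum_distrib_right sum.swap[of _ T])
  also have "\<dots> = (\<Sum>s\<in>S. \<Sum>t\<in>T. int (x (s, t)) * s - int (y (s, t)) * t)"
    by (simp add: sum_subtractf)
  finally show ?thesis
    by (simp add: sum.cartesian_product)
qed

lemma sum_marginals:
  fixes x y :: "'a \<times> 'b \<Rightarrow> nat"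
  shows "(\<Sum>s\<in>S. \<Sum>t\<in>T. x (s, t)) + (\<Sum>t\<in>T. \<Sum>s\<in>S. y (s, t))
       = (\<Sum>(s, t)\<in>S \<times> T. x (s, t) + y (s, t))"
proof -
  have "(\<Sum>t\<in>T. \<Sum>s\<in>S. y (s, t)) = (\<Sum>s\<in>S. \<Sum>t\<in>T. y (s, t))"
    by (rule sum.swap)
  then show ?thesis
    by (simp add: sum.distrib sum.cartesian_product)
qed

lemma equal_length_representations_of_multiples:
  fixes S T :: "int set" and l :: "int \<times> int \<Rightarrow> int"
  assumes d: "d = (\<Sum>(s, t)\<in>S \<times> T. l (s, t) * (s + t))"
  shows "\<exists>r a b c. \<forall>j\<le>K.
           r + int j * d = (\<Sum>s\<in>S. int (a j s) * s) - (\<Sum>t\<in>T. int (b j t) * t)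
         \<and> (\<Sum>s\<in>S. a j s) + (\<Sum>t\<in>T. b j t) = c"
proof -
  define x where "x j p = nat (int j * l p + int K * \<bar>l p\<bar>)" for j p
  define y where "y j p = nat (int K * \<bar>l p\<bar> - int j * l p)" for j p
  define r where "r = (\<Sum>(s, t)\<in>S \<times> T. int K * \<bar>l (s, t)\<bar> * (s - t))"
  define c where "c = (\<Sum>(s, t)\<in>S \<times> T. nat (2 * int K * \<bar>l (s, t)\<bar>))"
  define a where "a j s = (\<Sum>t\<in>T. x j (s, t))" for j s
  define b where "b j t = (\<Sum>s\<in>S. y j (s, t))" for j t
  have "\<forall>j\<le>K. r + int j * d = (\<Sum>s\<in>S. int (a j s) * s) - (\<Sum>t\<in>T. int (b j t) * t)
              \<and> (\<Sum>s\<in>S. a j s) + (\<Sum>t\<in>T. b j t) = c"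
  proof (intro allI impI conjI)
    fix j assume "j \<le> K"
    then have bound: "\<bar>int j * l p\<bar> \<le> int K * \<bar>l p\<bar>" for p
      by (simp add: abs_mult mult_right_mono)
    have x: "int (x j p) = int j * l p + int K * \<bar>l p\<bar>"
      and y: "int (y j p) = int K * \<bar>l p\<bar> - int j * l p" for p
      using bound[of p] unfolding x_def y_def by (auto simp: abs_le_iff)
    have "(\<Sum>s\<in>S. int (a j s) * s) - (\<Sum>t\<in>T. int (b j t) * t)
        = (\<Sum>(s, t)\<in>S \<times> T. int (x j (s, t)) * s - int (y j (s, t)) * t)"
      unfolding a_def b_def by (rule sum_marginals_weighted)
    also have "\<dots> = (\<Sum>(s, t)\<in>S \<times> T. int j * (l (s, t) * (s + t)) + int K * \<bar>l (s, t)\<bar> * (s - t))"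
      by (intro sum.cong) (auto simp: x y algebra_simps)
    also have "\<dots> = r + int j * d"
      by (simp add: r_def d sum.distrib sum_distrib_left case_prod_beta)
    finally show "r + int j * d = (\<Sum>s\<in>S. int (a j s) * s) - (\<Sum>t\<in>T. int (b j t) * t)" ..
    have "x j p + y j p = nat (2 * int K * \<bar>l p\<bar>)" for p
      using x[of p] y[of p] by linarith
    then show "(\<Sum>s\<in>S. a j s) + (\<Sum>t\<in>T. b j t) = c"
      unfolding a_def b_def by (simp add: sum_marginals c_def)
  qed
  then show ?thesis by blast
qed

theorem theorem4p2:
  fixes S T :: "int set" and k :: nat and d :: int
  assumes "finite S" "S \<noteq> {}" "\<forall>s\<in>S. s > 0"
      and "finite T" "T \<noteq> {}" "\<forall>t\<in>T. t > 0"
      and "d = Gcd {s + t | s t. s \<in> S \<and> t \<in> T}"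
      and "k > 0"
  shows "\<exists>r :: int. \<exists>(a :: nat \<Rightarrow> int \<Rightarrow> nat) (b :: nat \<Rightarrow> int \<Rightarrow> nat).
           (\<forall>j\<in>{1..k}. r + int j * d
              = (\<Sum>s\<in>S. int (a j s) * s) - (\<Sum>t\<in>T. int (b j t) * t))
         \<and> (\<exists>c. \<forall>j\<in>{1..k}. (\<Sum>s\<in>S. a j s) + (\<Sum>t\<in>T. b j t) = c)"
proof -
  have "{s + t | s t. s \<in> S \<and> t \<in> T} = (\<lambda>(s, t). s + t) ` (S \<times> T)"
    by auto
  then obtain l where "d = (\<Sum>(s, t)\<in>S \<times> T. l (s, t) * (s + t))"
    using Gcd_image_lincomb[of "S \<times> T" "\<lambda>(s, t). s + t"] assms
    by (auto simp: case_prod_beta)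
  then obtain r a b c where rep: "\<forall>j\<le>k.
      r + int j * d = (\<Sum>s\<in>S. int (a j s) * s) - (\<Sum>t\<in>T. int (b j t) * t)
    \<and> (\<Sum>s\<in>S. a j s) + (\<Sum>t\<in>T. b j t) = c"
    using equal_length_representations_of_multiples by blast
  show ?thesis
    using rep by (intro exI[of _ r] exI[of _ a] exI[of _ b] conjI exI[of _ c]) auto
qed

end
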